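(* Let $w$ be well-ordering on an interval $I$, $n\in\mathbb N$, and $A\subset\{1,\dots,2n\}$ with $|A|=n$ and $\max f_A\ge1$. Let $\ell_1<\dots<\ell_m$ be the integers $k\in\{1,\dots,2n\}$ with $f_A(k)=\max f_A$ (so $\ell_m<2n$), and set $B(A)=\big(A\cup\{\ell_j+1\}_{j=1}^m\big)\setminus\{\ell_j\}_{j=1}^m$. If $\mathrm{Osc}(f_A)\ge2$, then $\mathrm{Osc}(f_{B(A)})<\mathrm{Osc}(f_A)$. Moreover, for all $x_1\le x_2\le\dots\le x_{2n}$ in $I$, $c_n(x_{B(A)})+c_n(x_{B(A)^c})\le c_n(x_A)+c_n(x_{A^c}),$ and if $w$ is strictly well-ordering and $c_n(x_{B(A)})+c_n(x_{B(A)^c})<\infty$, equality holds if and only if $\sum_{k\in A}\delta_{x_k}=\sum_{k\in B(A)}\delta_{x_k}$ or $\sum_{k\in A}\delta_{x_k}=\sum_{k\in B(A)^c}\delta_{x_k}$.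
   Context: For $A\subset\{1,\dots,2n\}$ with $|A|=n$: $A^c=\{1,\dots,2n\}\setminus A$, $\mu_A=\sum_{j\in A}\delta_j-\sum_{j\in A^c}\delta_j$, $f_A(t)=\mu_A([0,t])$ for $t\in\mathbb R$ (the cumulative function; integer-valued, vanishes for $t<1$ and $t\ge2n$), and $\mathrm{Osc}(f_A)=\max f_A-\min f_A$. $c_n(y)=\sum_{i\ne j}w(y_i,y_j)$; $x_B=(x_{b})_{b\in B}$ in increasing order of indices. Well-ordering: $w$ continuous symmetric with, for $y_1\le y_2\le y_3\le y_4$ in $I$, $w(y_1,y_3)+w(y_2,y_4)=\min_\sigma[w(y_{\sigma(1)},y_{\sigma(2)})+w(y_{\sigma(3)},y_{\sigma(4)})]$ over permutations of $\{1,2,3,4\}$; strictly well-ordering: equality for a given $\sigma$ only if the sum is $\infty$ or $\delta_{y_1}+\delta_{y_3}\in\{\delta_{y_{\sigma(1)}}+\delta_{y_{\sigma(2)}},\delta_{y_{\sigma(3)}}+\delta_{y_{\sigma(4)}}\}$. *)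

theory Defs
  imports "HOL-Analysis.Analysis" "HOL-Combinatorics.Permutations" "HOL-Library.Multiset"
begin

text \<open>Weights take values in extended reals (the paper allows the value infinity).\<close>

definition well_ordering :: "real set \<Rightarrow> (real \<Rightarrow> real \<Rightarrow> ereal) \<Rightarrow> bool" where
  "well_ordering I w \<longleftrightarrow>
     continuous_on (I \<times> I) (\<lambda>p. w (fst p) (snd p)) \<and>
     (\<forall>a\<in>I. \<forall>b\<in>I. w a b = w b a) \<and>
     (\<forall>y::nat \<Rightarrow> real. (\<forall>i\<in>{1..4}. y i \<in> I) \<and> y 1 \<le> y 2 \<and> y 2 \<le> y 3 \<and> y 3 \<le> y 4 \<longrightarrow>
        w (y 1) (y 3) + w (y 2) (y 4) =
        Min {w (y (\<sigma> 1)) (y (\<sigma> 2)) + w (y (\<sigma> 3)) (y (\<sigma> 4)) | \<sigma>. \<sigma> permutes {1..4::nat}})"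

definition strictly_well_ordering :: "real set \<Rightarrow> (real \<Rightarrow> real \<Rightarrow> ereal) \<Rightarrow> bool" where
  "strictly_well_ordering I w \<longleftrightarrow> well_ordering I w \<and>
     (\<forall>y::nat \<Rightarrow> real. \<forall>\<sigma>. (\<forall>i\<in>{1..4}. y i \<in> I) \<and> y 1 \<le> y 2 \<and> y 2 \<le> y 3 \<and> y 3 \<le> y 4
        \<and> \<sigma> permutes {1..4::nat} \<and>
        w (y 1) (y 3) + w (y 2) (y 4) = w (y (\<sigma> 1)) (y (\<sigma> 2)) + w (y (\<sigma> 3)) (y (\<sigma> 4))
        \<longrightarrow> w (y 1) (y 3) + w (y 2) (y 4) = \<infinity> \<or>
            {#y 1, y 3#} \<in> {{#y (\<sigma> 1), y (\<sigma> 2)#}, {#y (\<sigma> 3), y (\<sigma> 4)#}})"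

definition cost :: "(real \<Rightarrow> real \<Rightarrow> ereal) \<Rightarrow> real list \<Rightarrow> ereal" where
  "cost w ys = (\<Sum>(i,j)\<in>{(i,j). i < length ys \<and> j < length ys \<and> i \<noteq> j}. w (ys ! i) (ys ! j))"

definition subvec :: "(nat \<Rightarrow> real) \<Rightarrow> nat set \<Rightarrow> real list" where
  "subvec x B = map x (sorted_list_of_set B)"

definition fcum :: "nat \<Rightarrow> nat set \<Rightarrow> real \<Rightarrow> int" where
  "fcum n A t = int (card {j\<in>A. real j \<le> t}) - int (card {j\<in>{1..2*n} - A. real j \<le> t})"

definition maxf :: "nat \<Rightarrow> nat set \<Rightarrow> int" where
  "maxf n A = Max (range (fcum n A))"

definition minf :: "nat \<Rightarrow> nat set \<Rightarrow> int" where
  "minf n A = Min (range (fcum n A))"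

definition osc :: "nat \<Rightarrow> nat set \<Rightarrow> int" where
  "osc n A = maxf n A - minf n A"

definition levels :: "nat \<Rightarrow> nat set \<Rightarrow> nat set" where
  "levels n A = {k \<in> {1..2*n}. fcum n A (real k) = maxf n A}"

definition BA :: "nat \<Rightarrow> nat set \<Rightarrow> nat set" where
  "BA n A = (A \<union> Suc ` levels n A) - levels n A"

end

theory Submission
  imports Defs
begin

text \<open>
  Write f for the walk of A and L for the set of positions where it attains its maximum M.
  Every l in L is an up-step followed by a down-step at l + 1, and B(A) swaps these two steps,
  so the walk of B(A) is f - 2 on L and f elsewhere: the maximum drops to M - 1 while, if the
  oscillation is at least 2, the minimum stays.

  For the costs, split the positions into the pairs {l, l + 1} and the set R of unmoved ones.
  Passing from A to B(A) only changes the interaction of each pair with R, since l and l + 1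
  trade sides. The walk of A on R has total 0 and is maximal just before l, so read cyclically
  from l + 1 every suffix of R contains at least as many points of A as of its complement.
  A ballot argument therefore matches every p in R - A with a point q in R that lies in A and
  follows p cyclically, and for such a pair the four-point condition gives
  w(x_p, x_l) + w(x_q, x_(l+1)) <= w(x_q, x_l) + w(x_p, x_(l+1)). Summing over the matching and
  over L gives the inequality. In the strict case equality forces x_p = x_q along the matching
  unless x_l = x_(l+1) for every l in L; this yields the two multiset identities.
\<close>

section \<open>Sums in the extended reals\<close>

lemma sum_neq_MInfty:
  fixes f :: "'a \<Rightarrow> ereal"
  assumes "\<And>a. a \<in> A \<Longrightarrow> f a \<noteq> -\<infinity>"
  shows "sum f A \<noteq> -\<infinity>"
  using assms by (induction A rule: infinite_finite_induct) auto

lemma ereal_add_mono_eq_imp_eq: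
  fixes u v u' v' :: ereal
  assumes "u \<le> u'" "v \<le> v'" "u + v = u' + v'" "u' + v' \<noteq> \<infinity>" "u \<noteq> -\<infinity>" "v \<noteq> -\<infinity>"
  shows "u = u'" "v = v'"
  using assms by (cases u; cases v; cases u'; cases v'; simp)+

lemma ereal_double_add_eq_imp_eq:
  fixes k d d' :: ereal
  assumes "d' \<le> d" "k + d' + d' = k + d + d" "k + d + d \<noteq> \<infinity>" "k \<noteq> -\<infinity>" "d' \<noteq> -\<infinity>"
  shows "d' = d" "d \<noteq> \<infinity>"
  using assms by (cases k; cases d; cases d'; simp)+

lemma sum_mono_eq_imp_eq:
  fixes f g :: "'a \<Rightarrow> ereal"
  assumes "finite A" "\<And>a. a \<in> A \<Longrightarrow> f a \<le> g a" "\<And>a. a \<in> A \<Longrightarrow> f a \<noteq> -\<infinity>"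
    and "sum f A = sum g A" "sum g A \<noteq> \<infinity>" "a \<in> A"
  shows "f a = g a" "g a \<noteq> \<infinity>"
proof -
  have "f a + sum f (A - {a}) = g a + sum g (A - {a})"
    using assms(1,4,6) by (simp add: sum.remove)
  moreover have "sum f (A - {a}) \<le> sum g (A - {a})"
    using assms(2) by (intro sum_mono) auto
  moreover have "sum f (A - {a}) \<noteq> -\<infinity>"
    using assms(3) by (intro sum_neq_MInfty) auto
  moreover have "g a + sum g (A - {a}) \<noteq> \<infinity>"
    using assms(1,5,6) by (simp add: sum.remove)
  ultimately show "f a = g a" using ereal_add_mono_eq_imp_eq assms(2,3,6) by metis
  show "g a \<noteq> \<infinity>" using assms(1,5,6) by (auto simp: sum_Pinfty)
qed

section \<open>The cost of a configuration\<close>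

lemma sum_off_diag_reindex:
  assumes "bij_betw f A B"
  shows "(\<Sum>(i, j)\<in>A \<times> A - Id. g (f i) (f j)) = (\<Sum>(p, q)\<in>B \<times> B - Id. g p q)"
proof -
  have f: "inj_on f A" "f ` A = B" using assms by (auto simp: bij_betw_def)
  have "bij_betw (map_prod f f) (A \<times> A - Id) (B \<times> B - Id)"
  proof (rule bij_betw_imageI)
    show "inj_on (map_prod f f) (A \<times> A - Id)"
      using map_prod_inj_on[OF f(1) f(1)] by (rule inj_on_subset) auto
    show "map_prod f f ` (A \<times> A - Id) = B \<times> B - Id"
    proof
      show "map_prod f f ` (A \<times> A - Id) \<subseteq> B \<times> B - Id" using f by (auto simp: inj_on_eq_iff)
      show "B \<times> B - Id \<subseteq> map_prod f f ` (A \<times> A - Id)"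
      proof
        fix pq assume "pq \<in> B \<times> B - Id"
        then obtain p q where "pq = (p, q)" "p \<noteq> q" "p \<in> B" "q \<in> B" by auto
        moreover obtain i j where "i \<in> A" "j \<in> A" "p = f i" "q = f j"
          using f(2) \<open>p \<in> B\<close> \<open>q \<in> B\<close> by blast
        ultimately show "pq \<in> map_prod f f ` (A \<times> A - Id)" by force
      qed
    qed
  qed
  then show ?thesis by (simp add: sum.reindex_bij_betw[symmetric] case_prod_beta)
qed

lemma sum_off_diag_Un:
  fixes g :: "'a \<Rightarrow> 'a \<Rightarrow> 'b::comm_monoid_add"
  assumes "finite X" "finite Y" "X \<inter> Y = {}" "\<And>p q. p \<in> X \<Longrightarrow> q \<in> Y \<Longrightarrow> g q p = g p q"
  shows "(\<Sum>(p, q)\<in>(X \<union> Y) \<times> (X \<union> Y) - Id. g p q)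
    = (\<Sum>(p, q)\<in>X \<times> X - Id. g p q) + (\<Sum>(p, q)\<in>Y \<times> Y - Id. g p q)
      + (\<Sum>q\<in>Y. \<Sum>p\<in>X. g p q) + (\<Sum>q\<in>Y. \<Sum>p\<in>X. g p q)"
proof -
  let ?g = "\<lambda>(p, q). g p q"
  have split: "(X \<union> Y) \<times> (X \<union> Y) - Id = ((X \<times> X - Id) \<union> (Y \<times> Y - Id)) \<union> (X \<times> Y \<union> Y \<times> X)"
    using assms(3) by auto
  have "sum ?g ((X \<union> Y) \<times> (X \<union> Y) - Id)
      = sum ?g ((X \<times> X - Id) \<union> (Y \<times> Y - Id)) + sum ?g (X \<times> Y \<union> Y \<times> X)"
    unfolding split using assms(1-3) by (intro sum.union_disjoint) auto
  also have "sum ?g ((X \<times> X - Id) \<union> (Y \<times> Y - Id)) = sum ?g (X \<times> X - Id) + sum ?g (Y \<times> Y - Id)"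
    using assms(1-3) by (intro sum.union_disjoint) auto
  also have "sum ?g (X \<times> Y \<union> Y \<times> X) = sum ?g (X \<times> Y) + sum ?g (Y \<times> X)"
    using assms(1-3) by (intro sum.union_disjoint) auto
  also have "sum ?g (X \<times> Y) = (\<Sum>q\<in>Y. \<Sum>p\<in>X. g p q)"
    by (simp add: sum.cartesian_product[symmetric] sum.swap[of _ X])
  also have "sum ?g (Y \<times> X) = (\<Sum>q\<in>Y. \<Sum>p\<in>X. g p q)"
    unfolding sum.cartesian_product[symmetric] using assms(4) by (intro sum.cong) auto
  finally show ?thesis by (simp add: add.assoc)
qed

lemma cost_eq_sum_index_pairs:
  "cost w ys = (\<Sum>(i, j)\<in>{..<length ys} \<times> {..<length ys} - Id. w (ys ! i) (ys ! j))"
  unfolding cost_def by (intro sum.cong) auto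

lemma cost_permute_list:
  assumes "p permutes {..<length ys}"
  shows "cost w (permute_list p ys) = cost w ys"
proof -
  have "cost w (permute_list p ys)
      = (\<Sum>(i, j)\<in>{..<length ys} \<times> {..<length ys} - Id. w (ys ! p i) (ys ! p j))"
    unfolding cost_eq_sum_index_pairs by (intro sum.cong) (auto simp: permute_list_nth assms)
  also have "\<dots> = cost w ys"
    unfolding cost_eq_sum_index_pairs by (rule sum_off_diag_reindex[OF permutes_imp_bij[OF assms]])
  finally show ?thesis .
qed

lemma cost_mset_eq: "mset ys = mset zs \<Longrightarrow> cost w ys = cost w zs"
  by (metis cost_permute_list mset_eq_permutation)

lemma cost_subvec_eq:
  "image_mset x (mset_set X) = image_mset x (mset_set Y) \<Longrightarrow> cost w (subvec x X) = cost w (subvec x Y)"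
  by (intro cost_mset_eq) (simp add: subvec_def, metis mset_sorted_list_of_multiset sorted_list_of_mset_set)

lemma cost_subvec:
  assumes "finite B"
  shows "cost w (subvec x B) = (\<Sum>(p, q)\<in>B \<times> B - Id. w (x p) (x q))"
proof -
  let ?xs = "sorted_list_of_set B"
  have "bij_betw ((!) ?xs) {..<length ?xs} B"
    using assms by (intro bij_betw_nth) auto
  have "cost w (subvec x B)
      = (\<Sum>(i, j)\<in>{..<length ?xs} \<times> {..<length ?xs} - Id. w (x (?xs ! i)) (x (?xs ! j)))"
    unfolding subvec_def cost_eq_sum_index_pairs by (intro sum.cong) auto
  also have "\<dots> = (\<Sum>(p, q)\<in>B \<times> B - Id. w (x p) (x q))"
    by (rule sum_off_diag_reindex) fact
  finally show ?thesis .
qed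

lemma image_mset_mset_set_Un:
  "finite X \<Longrightarrow> finite Y \<Longrightarrow> X \<inter> Y = {} \<Longrightarrow>
    image_mset f (mset_set (X \<union> Y)) = image_mset f (mset_set X) + image_mset f (mset_set Y)"
  by (simp add: mset_set_Union)

lemma cost_complements_eq_if_image_mset_eq:
  assumes "finite U" "A \<subseteq> U" "B \<subseteq> U"
    and "image_mset x (mset_set A) = image_mset x (mset_set B)
      \<or> image_mset x (mset_set A) = image_mset x (mset_set (U - B))"
  shows "cost w (subvec x B) + cost w (subvec x (U - B)) = cost w (subvec x A) + cost w (subvec x (U - A))"
proof -
  have split: "image_mset x (mset_set U) = image_mset x (mset_set X) + image_mset x (mset_set (U - X))"
    if "X \<subseteq> U" for X
  proof -
    have "U = X \<union> (U - X)" using that by auto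
    then show ?thesis
      using image_mset_mset_set_Un[of X "U - X" x] assms(1) finite_subset[OF that] by simp
  qed
  from assms(4) show ?thesis
  proof
    assume eq: "image_mset x (mset_set A) = image_mset x (mset_set B)"
    then have "image_mset x (mset_set (U - A)) = image_mset x (mset_set (U - B))"
      using split[OF assms(2)] split[OF assms(3)] by simp
    then show ?thesis using cost_subvec_eq[OF eq] cost_subvec_eq by metis
  next
    assume eq: "image_mset x (mset_set A) = image_mset x (mset_set (U - B))"
    then have "image_mset x (mset_set (U - A)) = image_mset x (mset_set B)"
      using split[OF assms(2)] split[OF assms(3)] by (simp add: add.commute)
    then show ?thesis using cost_subvec_eq[OF eq] cost_subvec_eq by (metis add.commute)
  qed
qed

section \<open>Four-point exchanges\<close>

lemma well_ordering_sym: "well_ordering I w \<Longrightarrow> a \<in> I \<Longrightarrow> b \<in> I \<Longrightarrow> w a b = w b a"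
  unfolding well_ordering_def by blast

lemma well_ordering_four_points:
  assumes wo: "well_ordering I w" and I: "y1 \<in> I" "y2 \<in> I" "y3 \<in> I" "y4 \<in> I"
    and ord: "y1 \<le> y2" "y2 \<le> y3" "y3 \<le> y4"
  shows "w y1 y3 + w y2 y4 \<le> w y1 y4 + w y2 y3"
    and "w y1 y3 + w y2 y4 \<le> w y1 y2 + w y3 y4"
proof -
  define y :: "nat \<Rightarrow> real" where "y i = (if i = 1 then y1 else if i = 2 then y2 else if i = 3 then y3 else y4)" for i
  let ?pairing = "\<lambda>\<sigma>. w (y (\<sigma> 1)) (y (\<sigma> 2)) + w (y (\<sigma> 3)) (y (\<sigma> 4))"
  have y: "y 1 = y1" "y 2 = y2" "y 3 = y3" "y 4 = y4" by (simp_all add: y_def)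
  have "(\<forall>i\<in>{1..4}. y i \<in> I) \<and> y 1 \<le> y 2 \<and> y 2 \<le> y 3 \<and> y 3 \<le> y 4"
    using I ord by (simp add: y_def)
  with wo have "w (y 1) (y 3) + w (y 2) (y 4) = Min {?pairing \<sigma> | \<sigma>. \<sigma> permutes {1..4::nat}}"
    unfolding well_ordering_def by (elim conjE allE[where x = y] impE) blast+
  then have min: "w y1 y3 + w y2 y4 = Min {?pairing \<sigma> | \<sigma>. \<sigma> permutes {1..4::nat}}"
    by (simp only: y)
  have fin: "finite {?pairing \<sigma> | \<sigma>. \<sigma> permutes {1..4::nat}}"
    using finite_permutations[of "{1..4::nat}"] by (simp add: setcompr_eq_image)
  have le: "w y1 y3 + w y2 y4 \<le> ?pairing \<sigma>" if "\<sigma> permutes {1..4}" for \<sigma>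
    unfolding min using fin that by (intro Min_le) auto
  have "Transposition.transpose 2 4 permutes {1..4::nat}"
    by (intro permutes_swap_id) auto
  from le[OF this] show "w y1 y3 + w y2 y4 \<le> w y1 y4 + w y2 y3"
    using well_ordering_sym[OF wo I(2,3)] by (simp add: y_def Transposition.transpose_def)
  from le[OF permutes_id] show "w y1 y3 + w y2 y4 \<le> w y1 y2 + w y3 y4"
    by (simp add: y_def)
qed

lemma strictly_well_ordering_four_points:
  assumes swo: "strictly_well_ordering I w" and I: "y1 \<in> I" "y2 \<in> I" "y3 \<in> I" "y4 \<in> I"
    and ord: "y1 \<le> y2" "y2 \<le> y3" "y3 \<le> y4" and fin: "w y1 y3 + w y2 y4 \<noteq> \<infinity>"
  shows "w y1 y3 + w y2 y4 = w y1 y4 + w y2 y3 \<Longrightarrow> y1 = y2 \<or> y3 = y4"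
    and "w y1 y3 + w y2 y4 = w y1 y2 + w y3 y4 \<Longrightarrow> y2 = y3 \<or> y1 = y4"
proof -
  define y :: "nat \<Rightarrow> real" where "y i = (if i = 1 then y1 else if i = 2 then y2 else if i = 3 then y3 else y4)" for i
  have y: "y 1 = y1" "y 2 = y2" "y 3 = y3" "y 4 = y4" by (simp_all add: y_def)
  have strict: "{#y1, y3#} \<in> {{#y (\<sigma> 1), y (\<sigma> 2)#}, {#y (\<sigma> 3), y (\<sigma> 4)#}}"
    if "\<sigma> permutes {1..4}" "w y1 y3 + w y2 y4 = w (y (\<sigma> 1)) (y (\<sigma> 2)) + w (y (\<sigma> 3)) (y (\<sigma> 4))" for \<sigma>
  proof -
    have "(\<forall>i\<in>{1..4}. y i \<in> I) \<and> y 1 \<le> y 2 \<and> y 2 \<le> y 3 \<and> y 3 \<le> y 4"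
      using I ord by (simp add: y_def)
    moreover have "w (y 1) (y 3) + w (y 2) (y 4) = w (y (\<sigma> 1)) (y (\<sigma> 2)) + w (y (\<sigma> 3)) (y (\<sigma> 4))"
      using that(2) by (simp only: y)
    ultimately have "w (y 1) (y 3) + w (y 2) (y 4) = \<infinity> \<or>
        {#y 1, y 3#} \<in> {{#y (\<sigma> 1), y (\<sigma> 2)#}, {#y (\<sigma> 3), y (\<sigma> 4)#}}"
      using swo that(1) unfolding strictly_well_ordering_def
      by (elim conjE allE[where x = y] allE[where x = \<sigma>] impE) blast+
    with fin show ?thesis by (simp only: y) blast
  qed
  have wo: "well_ordering I w" using swo by (simp add: strictly_well_ordering_def)
  have "Transposition.transpose 2 4 permutes {1..4::nat}"
    by (intro permutes_swap_id) auto
  from strict[OF this] show "y1 = y2 \<or> y3 = y4" if "w y1 y3 + w y2 y4 = w y1 y4 + w y2 y3"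
    using that well_ordering_sym[OF wo I(2,3)]
    by (auto simp: y_def Transposition.transpose_def add_eq_conv_ex)
  from strict[OF permutes_id] show "y2 = y3 \<or> y1 = y4" if "w y1 y3 + w y2 y4 = w y1 y2 + w y3 y4"
    using that by (auto simp: y_def add_eq_conv_ex)
qed

(* The disjunction says that p precedes q in the cyclic order of the line that starts right
   after b. *)
lemma well_ordering_exchange:
  assumes wo: "well_ordering I w" and I: "a \<in> I" "b \<in> I" "p \<in> I" "q \<in> I" and "a \<le> b"
    and cyclic: "b \<le> p \<and> p \<le> q \<or> q \<le> a \<and> b \<le> p \<or> p \<le> q \<and> q \<le> a"
  shows "w p a + w q b \<le> w q a + w p b"
  using cyclic
proof (elim disjE conjE)
  assume "b \<le> p" "p \<le> q"
  then show ?thesis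
    using well_ordering_four_points(1)[OF wo I(1,2,3,4) \<open>a \<le> b\<close>] well_ordering_sym[OF wo] I
    by (simp add: add.commute)
next
  assume "q \<le> a" "b \<le> p"
  then show ?thesis
    using well_ordering_four_points(2)[OF wo I(4,1,2,3) _ \<open>a \<le> b\<close>] well_ordering_sym[OF wo] I
    by (simp add: add.commute)
next
  assume "p \<le> q" "q \<le> a"
  then show ?thesis
    using well_ordering_four_points(1)[OF wo I(3,4,1,2) _ _ \<open>a \<le> b\<close>] by (simp add: add.commute)
qed

lemma strictly_well_ordering_exchange:
  assumes swo: "strictly_well_ordering I w" and I: "a \<in> I" "b \<in> I" "p \<in> I" "q \<in> I" and "a < b"
    and cyclic: "b \<le> p \<and> p \<le> q \<or> q \<le> a \<and> b \<le> p \<or> p \<le> q \<and> q \<le> a"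
    and eq: "w p a + w q b = w q a + w p b" and fin: "w q a + w p b \<noteq> \<infinity>"
  shows "p = q"
proof -
  have "well_ordering I w" using swo by (simp add: strictly_well_ordering_def)
  then have sym: "w p a = w a p" "w q b = w b q" "w q a = w a q" "w p b = w b p"
    using I by (auto intro: well_ordering_sym)
  from cyclic show ?thesis
  proof (elim disjE conjE)
    assume "b \<le> p" "p \<le> q"
    have "w a p + w b q \<noteq> \<infinity>" using eq fin by (simp add: sym)
    from strictly_well_ordering_four_points(1)[OF swo I(1,2,3,4) _ \<open>b \<le> p\<close> \<open>p \<le> q\<close> this]
    show ?thesis using \<open>a < b\<close> eq by (simp add: sym add.commute)
  next
    assume "q \<le> a" "b \<le> p"
    have "w q b + w a p \<noteq> \<infinity>" using eq fin by (simp add: sym add.commute)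
    from strictly_well_ordering_four_points(2)[OF swo I(4,1,2,3) \<open>q \<le> a\<close> _ \<open>b \<le> p\<close> this]
    show ?thesis using \<open>a < b\<close> eq by (simp add: sym add.commute)
  next
    assume "p \<le> q" "q \<le> a"
    have "w p a + w q b \<noteq> \<infinity>" using eq fin by simp
    from strictly_well_ordering_four_points(1)[OF swo I(3,4,1,2) \<open>p \<le> q\<close> \<open>q \<le> a\<close> _ this]
    show ?thesis using \<open>a < b\<close> eq by (simp add: add.commute)
  qed
qed

section \<open>Matchings\<close>

lemma ballot_condition_Diff:
  fixes \<kappa> :: "'a \<Rightarrow> 'b::linorder"
  assumes "finite N" "finite Q" "p \<notin> N" "\<And>p'. p' \<in> N \<Longrightarrow> \<kappa> p' \<le> \<kappa> p" "q \<in> Q" "\<kappa> p < \<kappa> q"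
    and ballot: "\<And>c. card {p'\<in>insert p N. c \<le> \<kappa> p'} \<le> card {q'\<in>Q. c \<le> \<kappa> q'}"
  shows "card {p'\<in>N. c \<le> \<kappa> p'} \<le> card {q'\<in>Q - {q}. c \<le> \<kappa> q'}"
proof (cases "c \<le> \<kappa> p")
  case True
  have "{p'\<in>insert p N. c \<le> \<kappa> p'} = insert p {p'\<in>N. c \<le> \<kappa> p'}" using True by auto
  then have "Suc (card {p'\<in>N. c \<le> \<kappa> p'}) \<le> card {q'\<in>Q. c \<le> \<kappa> q'}"
    using ballot[of c] assms(1,3) by simp
  moreover have "{q'\<in>Q - {q}. c \<le> \<kappa> q'} = {q'\<in>Q. c \<le> \<kappa> q'} - {q}" by auto
  moreover have "q \<in> {q'\<in>Q. c \<le> \<kappa> q'}" using assms(5,6) True by simp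
  ultimately show ?thesis using assms(2) by simp
next
  case False
  then have "{p'\<in>N. c \<le> \<kappa> p'} = {}" using assms(4) by force
  then show ?thesis by (simp only: card.empty le0)
qed

lemma ballot_matching:
  fixes \<kappa> :: "'a \<Rightarrow> 'b::linorder"
  assumes "finite N" "finite Q" "\<kappa> ` N \<inter> \<kappa> ` Q = {}"
    and "\<And>c. card {p\<in>N. c \<le> \<kappa> p} \<le> card {q\<in>Q. c \<le> \<kappa> q}"
  shows "\<exists>\<pi>. inj_on \<pi> N \<and> \<pi> ` N \<subseteq> Q \<and> (\<forall>p\<in>N. \<kappa> p < \<kappa> (\<pi> p))"
  using assms
proof (induction N arbitrary: Q rule: finite_ranking_induct[where f = \<kappa>])
  case empty
  then show ?case by auto
next
  case (insert p N)
  \<comment> \<open>p has the largest rank: match it with any point of Q of larger rank.\<close>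
  show ?case
  proof (cases "p \<in> N")
    case True
    then show ?thesis using insert by (simp add: insert_absorb)
  next
    case p_new: False
    have "0 < card {p'\<in>insert p N. \<kappa> p \<le> \<kappa> p'}"
      using insert.hyps(1) by (auto simp: card_gt_0_iff)
    also have "\<dots> \<le> card {q\<in>Q. \<kappa> p \<le> \<kappa> q}" by (rule insert.prems(3))
    finally obtain q where q: "q \<in> Q" "\<kappa> p \<le> \<kappa> q" by (auto simp: card_gt_0_iff)
    moreover have "\<kappa> q \<noteq> \<kappa> p" using insert.prems(2) q(1) by blast
    ultimately have "\<kappa> p < \<kappa> q" by simp
    have "card {p'\<in>N. c \<le> \<kappa> p'} \<le> card {q'\<in>Q - {q}. c \<le> \<kappa> q'}" for c
      by (rule ballot_condition_Diff[where \<kappa> = \<kappa>])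
        (use insert.hyps insert.prems p_new q \<open>\<kappa> p < \<kappa> q\<close> in auto)
    then obtain \<pi> where \<pi>: "inj_on \<pi> N" "\<pi> ` N \<subseteq> Q - {q}" "\<forall>p'\<in>N. \<kappa> p' < \<kappa> (\<pi> p')"
      using insert.IH[of "Q - {q}"] insert.prems by blast
    show ?thesis
    proof (intro exI conjI)
      show "inj_on (\<pi>(p := q)) (insert p N)" using \<pi>(1,2) p_new by (auto simp: inj_on_def)
      show "(\<pi>(p := q)) ` insert p N \<subseteq> Q" using \<pi>(2) q(1) p_new by auto
      show "\<forall>p'\<in>insert p N. \<kappa> p' < \<kappa> ((\<pi>(p := q)) p')" using \<pi>(3) \<open>\<kappa> p < \<kappa> q\<close> by auto
    qed
  qed
qed

lemma exchange_sum_le: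
  fixes a b :: "'a \<Rightarrow> ereal"
  assumes "bij_betw \<pi> N Q" "\<And>p. p \<in> N \<Longrightarrow> a p + b (\<pi> p) \<le> a (\<pi> p) + b p"
  shows "sum a N + sum b Q \<le> sum a Q + sum b N"
proof -
  have "sum a N + sum b Q = (\<Sum>p\<in>N. a p + b (\<pi> p))"
    by (simp add: sum.distrib sum.reindex_bij_betw[OF assms(1)])
  also have "\<dots> \<le> (\<Sum>p\<in>N. a (\<pi> p) + b p)"
    using assms(2) by (rule sum_mono)
  also have "\<dots> = sum a Q + sum b N"
    by (simp add: sum.distrib sum.reindex_bij_betw[OF assms(1)])
  finally show ?thesis .
qed

lemma exchange_sum_eq_imp_eq:
  fixes a b :: "'a \<Rightarrow> ereal"
  assumes "finite N" "bij_betw \<pi> N Q" "\<And>p. p \<in> N \<Longrightarrow> a p + b (\<pi> p) \<le> a (\<pi> p) + b p"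
    and "\<And>p. p \<in> N \<union> Q \<Longrightarrow> a p \<noteq> -\<infinity> \<and> b p \<noteq> -\<infinity>"
    and "sum a N + sum b Q = sum a Q + sum b N" "sum a Q + sum b N \<noteq> \<infinity>" "p \<in> N"
  shows "a p + b (\<pi> p) = a (\<pi> p) + b p" "a (\<pi> p) + b p \<noteq> \<infinity>"
proof -
  have "\<pi> ` N = Q" using assms(2) by (simp add: bij_betw_def)
  have "(\<Sum>p\<in>N. a p + b (\<pi> p)) = (\<Sum>p\<in>N. a (\<pi> p) + b p)"
    using assms(5) by (simp add: sum.distrib sum.reindex_bij_betw[OF assms(2)])
  moreover have "(\<Sum>p\<in>N. a (\<pi> p) + b p) \<noteq> \<infinity>"
    using assms(6) by (simp add: sum.distrib sum.reindex_bij_betw[OF assms(2)])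
  moreover have "a p + b (\<pi> p) \<noteq> -\<infinity>" if "p \<in> N" for p
    using assms(4) that \<open>\<pi> ` N = Q\<close> by auto
  ultimately show "a p + b (\<pi> p) = a (\<pi> p) + b p" "a (\<pi> p) + b p \<noteq> \<infinity>"
    using sum_mono_eq_imp_eq[where f = "\<lambda>p. a p + b (\<pi> p)" and g = "\<lambda>p. a (\<pi> p) + b p"]
      assms(1,3,7) by blast+
qed

lemma image_mset_eq_if_bij_betw:
  assumes "finite N" "bij_betw \<pi> N Q" "\<And>p. p \<in> N \<Longrightarrow> x (\<pi> p) = x p"
  shows "image_mset x (mset_set N) = image_mset x (mset_set Q)"
proof -
  have "mset_set Q = image_mset \<pi> (mset_set N)"
    using assms(2) by (simp add: bij_betw_def image_mset_mset_set)
  then have "image_mset x (mset_set Q) = image_mset (x \<circ> \<pi>) (mset_set N)"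
    by (simp add: multiset.map_comp)
  also have "\<dots> = image_mset x (mset_set N)"
    using assms(1,3) by (intro image_mset_cong) simp
  finally show ?thesis ..
qed

section \<open>Walks\<close>

definition balance :: "nat set \<Rightarrow> nat set \<Rightarrow> int" where
  "balance P X = int (card (X \<inter> P)) - int (card (X - P))"

definition walk :: "nat set \<Rightarrow> nat set \<Rightarrow> nat \<Rightarrow> int" where
  "walk P X k = balance P {j\<in>X. j \<le> k}"

lemma balance_empty [simp]: "balance P {} = 0"
  by (simp add: balance_def)

lemma balance_Un:
  assumes "finite X" "finite Y" "X \<inter> Y = {}"
  shows "balance P (X \<union> Y) = balance P X + balance P Y"
proof -
  have "card ((X \<union> Y) \<inter> P) = card (X \<inter> P) + card (Y \<inter> P)"
    using assms by (subst card_Un_disjoint[symmetric]) (auto intro: arg_cong[where f = card])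
  moreover have "card ((X \<union> Y) - P) = card (X - P) + card (Y - P)"
    using assms by (subst card_Un_disjoint[symmetric]) (auto intro: arg_cong[where f = card])
  ultimately show ?thesis by (simp add: balance_def)
qed

lemma balance_nonneg_imp_card_le: "0 \<le> balance P X \<Longrightarrow> card (X - P) \<le> card (X \<inter> P)"
  by (simp add: balance_def)

lemma walk_0:
  assumes "0 \<notin> X"
  shows "walk P X 0 = 0"
proof -
  have "{j\<in>X. j \<le> 0} = {}" using assms by auto
  then show ?thesis unfolding walk_def by (simp only: balance_empty)
qed

lemma walk_Suc:
  assumes "finite X"
  shows "walk P X (Suc k) = walk P X k + (if Suc k \<in> X then if Suc k \<in> P then 1 else -1 else 0)"
proof -
  have "{j\<in>X. j \<le> Suc k} = {j\<in>X. j \<le> k} \<union> ({Suc k} \<inter> X)" by auto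
  then have "walk P X (Suc k) = walk P X k + balance P ({Suc k} \<inter> X)"
    unfolding walk_def using assms by (simp only:) (rule balance_Un, auto)
  then show ?thesis by (cases "Suc k \<in> X"; cases "Suc k \<in> P") (simp_all add: balance_def Diff_triv)
qed

lemma walk_eq_balance:
  assumes "\<And>j. j \<in> X \<Longrightarrow> j \<le> k"
  shows "walk P X k = balance P X"
proof -
  have "{j\<in>X. j \<le> k} = X" using assms by auto
  then show ?thesis by (simp only: walk_def)
qed

lemma balance_greater:
  assumes "finite X"
  shows "balance P {j\<in>X. k < j} = balance P X - walk P X k"
proof -
  have "balance P X = balance P ({j\<in>X. j \<le> k} \<union> {j\<in>X. k < j})"
    by (rule arg_cong[where f = "balance P"]) auto
  also have "\<dots> = walk P X k + balance P {j\<in>X. k < j}"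
    unfolding walk_def using assms by (intro balance_Un) auto
  finally show ?thesis by simp
qed

lemma balance_between:
  assumes "finite X" "a \<le> b"
  shows "balance P {j\<in>X. a < j \<and> j \<le> b} = walk P X b - walk P X a"
proof -
  have "{j\<in>X. j \<le> b} = {j\<in>X. j \<le> a} \<union> {j\<in>X. a < j \<and> j \<le> b}" using assms(2) by auto
  then have "walk P X b = walk P X a + balance P {j\<in>X. a < j \<and> j \<le> b}"
    unfolding walk_def using assms(1) by (simp only:) (rule balance_Un, auto)
  then show ?thesis by simp
qed

(* On {1..N}: first the points after m, then those up to m, i.e. the cyclic order from m + 1. *)
definition cyclic_rank :: "nat \<Rightarrow> nat \<Rightarrow> nat \<Rightarrow> nat" where
  "cyclic_rank N m r = (if m < r then r else r + N)"

lemma inj_on_cyclic_rank: "inj_on (cyclic_rank N m) {1..N}"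
  by (rule inj_onI) (auto simp: cyclic_rank_def split: if_splits)

lemma balance_cyclic_suffix_nonneg:
  assumes X: "X \<subseteq> {1..N}" and "balance P X = 0" and max: "\<And>k. walk P X k \<le> walk P X m"
  shows "0 \<le> balance P {r\<in>X. c \<le> cyclic_rank N m r}"
proof -
  have fin: "finite X" using X by (rule finite_subset) simp
  show ?thesis
  proof (cases "c \<le> N")
    case True
    define k where "k = max m (c - 1)"
    have "{r\<in>X. c \<le> cyclic_rank N m r} = {r\<in>X. k < r} \<union> {r\<in>X. r \<le> m}"
      using X True by (auto simp: cyclic_rank_def k_def)
    then have "balance P {r\<in>X. c \<le> cyclic_rank N m r} = balance P {r\<in>X. k < r} + walk P X m"
      unfolding walk_def using fin by (simp only:) (rule balance_Un, auto simp: k_def)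
    also have "\<dots> = walk P X m - walk P X k"
      using fin \<open>balance P X = 0\<close> by (simp add: balance_greater)
    finally show ?thesis using max[of k] by simp
  next
    case False
    define a where "a = c - N - 1"
    have suffix: "{r\<in>X. c \<le> cyclic_rank N m r} = {r\<in>X. a < r \<and> r \<le> m}"
      using X False by (auto simp: cyclic_rank_def a_def)
    show ?thesis
    proof (cases "a \<le> m")
      case True
      then show ?thesis using max[of a] by (simp add: suffix balance_between fin)
    next
      case False
      then have "{r\<in>X. a < r \<and> r \<le> m} = {}" by auto
      then show ?thesis by (simp only: suffix balance_empty)
    qed
  qed
qed

lemma fcum_eq_walk:
  assumes "A \<subseteq> {1..2*n}"
  shows "fcum n A t = walk A {1..2*n} (nat \<lfloor>t\<rfloor>)"
proof -
  have le_iff: "real j \<le> t \<longleftrightarrow> j \<le> nat \<lfloor>t\<rfloor>" if "1 \<le> j" for j :: nat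
    using that by linarith
  have "{j\<in>A. real j \<le> t} = {j\<in>{1..2*n}. j \<le> nat \<lfloor>t\<rfloor>} \<inter> A"
    using assms le_iff by auto
  moreover have "{j\<in>{1..2*n} - A. real j \<le> t} = {j\<in>{1..2*n}. j \<le> nat \<lfloor>t\<rfloor>} - A"
    using le_iff by auto
  ultimately show ?thesis by (simp add: fcum_def walk_def balance_def)
qed

lemma range_fcum:
  assumes "A \<subseteq> {1..2*n}"
  shows "range (fcum n A) = walk A {1..2*n} ` {0..2*n}"
proof -
  have "walk A {1..2*n} k \<in> walk A {1..2*n} ` {0..2*n}" for k
  proof (cases "k \<le> 2*n")
    case False
    then have "walk A {1..2*n} k = walk A {1..2*n} (2*n)"
      using walk_eq_balance[of "{1..2*n}" k A] walk_eq_balance[of "{1..2*n}" "2*n" A] by auto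
    then show ?thesis by auto
  qed auto
  then have "range (fcum n A) \<subseteq> walk A {1..2*n} ` {0..2*n}"
    using assms by (auto simp: fcum_eq_walk)
  moreover have "walk A {1..2*n} k \<in> range (fcum n A)" for k
    using fcum_eq_walk[OF assms, of "real k"] by (metis floor_of_nat nat_int rangeI)
  ultimately show ?thesis by blast
qed

section \<open>Lowering the peaks\<close>

locale peak_lowering =
  fixes n :: nat and A :: "nat set"
  assumes A_subset: "A \<subseteq> {1..2*n}" and card_A: "card A = n" and maxf_pos: "1 \<le> maxf n A"
begin

lemma maxf_eq_Max_walk: "maxf n A = Max (walk A {1..2*n} ` {0..2*n})"
  by (simp add: maxf_def range_fcum[OF A_subset])

lemma walk_le_maxf: "k \<le> 2*n \<Longrightarrow> walk A {1..2*n} k \<le> maxf n A"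
  unfolding maxf_eq_Max_walk by (rule Max_ge) auto

lemma walk_start: "walk A {1..2*n} 0 = 0"
  by (rule walk_0) simp

lemma walk_end: "walk A {1..2*n} (2*n) = 0"
proof -
  have "card ({1..2*n} \<inter> A) = n" "card ({1..2*n} - A) = n"
    using A_subset card_A by (simp_all add: Int_absorb1 card_Diff_subset finite_subset)
  then show ?thesis using walk_eq_balance[of "{1..2*n}" "2*n" A] by (simp add: balance_def)
qed

lemma walk_step:
  "walk A {1..2*n} (Suc k) = walk A {1..2*n} k + (if Suc k \<le> 2*n then if Suc k \<in> A then 1 else -1 else 0)"
  by (simp add: walk_Suc)

lemma levels_iff: "l \<in> levels n A \<longleftrightarrow> 1 \<le> l \<and> l \<le> 2*n \<and> walk A {1..2*n} l = maxf n A"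
  by (auto simp: levels_def fcum_eq_walk[OF A_subset])

lemma levelsD:
  assumes "l \<in> levels n A"
  shows "l \<in> A" "Suc l \<notin> A" "1 \<le> l" "Suc l \<le> 2*n"
    and "walk A {1..2*n} (l - 1) = maxf n A - 1" "walk A {1..2*n} (Suc l) = maxf n A - 1"
proof -
  have l: "1 \<le> l" "l \<le> 2*n" "walk A {1..2*n} l = maxf n A" using assms levels_iff by auto
  then show "1 \<le> l" by simp
  have "walk A {1..2*n} (l - 1) \<le> maxf n A" using l by (intro walk_le_maxf) simp
  moreover have "walk A {1..2*n} l = walk A {1..2*n} (l - 1) + (if l \<in> A then 1 else -1)"
    using walk_step[of "l - 1"] l by simp
  ultimately show "l \<in> A" "walk A {1..2*n} (l - 1) = maxf n A - 1"
    using l(3) by (auto split: if_splits)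
  have "l \<noteq> 2*n" using l(3) walk_end maxf_pos by auto
  then show "Suc l \<le> 2*n" using l(2) by simp
  then have "walk A {1..2*n} (Suc l) \<le> maxf n A" by (intro walk_le_maxf)
  moreover have "walk A {1..2*n} (Suc l) = maxf n A + (if Suc l \<in> A then 1 else -1)"
    using walk_step[of l] l \<open>Suc l \<le> 2*n\<close> by simp
  ultimately show "Suc l \<notin> A" "walk A {1..2*n} (Suc l) = maxf n A - 1"
    by (auto split: if_splits)
qed

lemma Suc_notin_levels: "l \<in> levels n A \<Longrightarrow> Suc l \<notin> levels n A"
  using levelsD(1,2) by blast

lemma pred_notin_levels: "l \<in> levels n A \<Longrightarrow> l - 1 \<notin> levels n A"
  using levelsD(3,5) levels_iff by force

lemma levels_nonempty: "levels n A \<noteq> {}"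
proof -
  have "maxf n A \<in> walk A {1..2*n} ` {0..2*n}" unfolding maxf_eq_Max_walk by (rule Max_in) auto
  then obtain k where k: "k \<le> 2*n" "walk A {1..2*n} k = maxf n A" by auto
  moreover have "k \<noteq> 0" using k walk_start maxf_pos by (cases k) auto
  ultimately show ?thesis using levels_iff by auto
qed

lemma walk_below_maxf: "k \<le> 2*n \<Longrightarrow> k \<notin> levels n A \<Longrightarrow> walk A {1..2*n} k \<le> maxf n A - 1"
  using walk_le_maxf[of k] walk_start maxf_pos levels_iff by (cases "k = 0") force+

lemma BA_eq: "BA n A = (A - levels n A) \<union> Suc ` levels n A"
  unfolding BA_def using Suc_notin_levels by auto

lemma BA_subset: "BA n A \<subseteq> {1..2*n}"
  using A_subset levelsD(3,4) by (auto simp: BA_eq)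

lemma walk_BA: "walk (BA n A) {1..2*n} k = walk A {1..2*n} k - (if k \<in> levels n A then 2 else 0)"
proof (induction k)
  case 0
  then show ?case using walk_start walk_0[of "{1..2*n}" "BA n A"] levels_iff by simp
next
  case (Suc k)
  have step: "walk (BA n A) {1..2*n} (Suc k)
      = walk (BA n A) {1..2*n} k + (if Suc k \<le> 2*n then if Suc k \<in> BA n A then 1 else -1 else 0)"
    by (simp add: walk_Suc)
  consider "Suc k \<in> levels n A" | "k \<in> levels n A" | "Suc k \<notin> levels n A" "k \<notin> levels n A"
    by blast
  then show ?case
  proof cases
    case 1
    then have "k \<notin> levels n A" "Suc k \<notin> BA n A" "Suc k \<in> A" "Suc k \<le> 2*n"
      using Suc_notin_levels levelsD(2) levels_iff by (auto simp: BA_eq intro: levelsD(1))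
    then show ?thesis using step Suc.IH walk_step[of k] 1 by simp
  next
    case 2
    then have "Suc k \<notin> levels n A" "Suc k \<in> BA n A" "Suc k \<notin> A" "Suc k \<le> 2*n"
      using Suc_notin_levels levelsD[OF 2] by (auto simp: BA_eq)
    then show ?thesis using step Suc.IH walk_step[of k] 2 by simp
  next
    case 3
    then have "Suc k \<in> BA n A \<longleftrightarrow> Suc k \<in> A" by (auto simp: BA_eq)
    then show ?thesis using step Suc.IH walk_step[of k] 3 by simp
  qed
qed

lemma maxf_BA: "maxf n (BA n A) = maxf n A - 1"
proof -
  have "maxf n (BA n A) = Max (walk (BA n A) {1..2*n} ` {0..2*n})"
    by (simp add: maxf_def range_fcum[OF BA_subset])
  also have "\<dots> = maxf n A - 1"
  proof (rule Max_eqI)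
    show "y \<le> maxf n A - 1" if y: "y \<in> walk (BA n A) {1..2*n} ` {0..2*n}" for y
    proof -
      obtain k where k: "k \<le> 2*n" "y = walk (BA n A) {1..2*n} k" using y by auto
      then show ?thesis
        using walk_BA[of k] walk_below_maxf[of k] levels_iff[of k] by (cases "k \<in> levels n A") auto
    qed
    obtain l where l: "l \<in> levels n A" using levels_nonempty by blast
    then have "walk (BA n A) {1..2*n} (l - 1) = maxf n A - 1"
      using walk_BA[of "l - 1"] pred_notin_levels[OF l] levelsD(5)[OF l] by simp
    moreover have "l - 1 \<in> {0..2*n}" using levelsD(4)[OF l] by simp
    ultimately show "maxf n A - 1 \<in> walk (BA n A) {1..2*n} ` {0..2*n}" by (metis image_eqI)
  qed simp
  finally show ?thesis .
qed

lemma minf_BA: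
  assumes "minf n A \<le> maxf n A - 2"
  shows "minf n (BA n A) = minf n A"
proof -
  have minf_A: "minf n A = Min (walk A {1..2*n} ` {0..2*n})"
    by (simp add: minf_def range_fcum[OF A_subset])
  have "minf n (BA n A) = Min (walk (BA n A) {1..2*n} ` {0..2*n})"
    by (simp add: minf_def range_fcum[OF BA_subset])
  also have "\<dots> = minf n A"
  proof (rule Min_eqI)
    show "minf n A \<le> y" if y: "y \<in> walk (BA n A) {1..2*n} ` {0..2*n}" for y
    proof -
      obtain k where k: "k \<le> 2*n" "y = walk (BA n A) {1..2*n} k" using y by auto
      have "minf n A \<le> walk A {1..2*n} k" unfolding minf_A using k(1) by (intro Min_le) auto
      then show ?thesis
        using k walk_BA[of k] assms levels_iff[of k] by (cases "k \<in> levels n A") auto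
    qed
    have "minf n A \<in> walk A {1..2*n} ` {0..2*n}" unfolding minf_A by (rule Min_in) auto
    then obtain k where k: "k \<le> 2*n" "walk A {1..2*n} k = minf n A" by auto
    then have "k \<notin> levels n A" using assms levels_iff maxf_pos by auto
    then have "walk (BA n A) {1..2*n} k = minf n A" using k walk_BA[of k] by simp
    then show "minf n A \<in> walk (BA n A) {1..2*n} ` {0..2*n}" using k(1) by force
  qed simp
  finally show ?thesis .
qed

lemma osc_BA_less: "2 \<le> osc n A \<Longrightarrow> osc n (BA n A) < osc n A"
  using maxf_BA minf_BA unfolding osc_def by auto

definition unmoved :: "nat set" where
  "unmoved = {1..2*n} - levels n A - Suc ` levels n A"

lemma unmoved_subset: "unmoved \<subseteq> {1..2*n}"
  by (auto simp: unmoved_def)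

lemma walk_unmoved: "walk A unmoved k = walk A {1..2*n} k - (if k \<in> levels n A then 1 else 0)"
proof (induction k)
  case 0
  then show ?case using walk_start walk_0[of unmoved A] levels_iff by (simp add: unmoved_def)
next
  case (Suc k)
  have step: "walk A unmoved (Suc k)
      = walk A unmoved k + (if Suc k \<in> unmoved then if Suc k \<in> A then 1 else -1 else 0)"
    by (simp add: walk_Suc unmoved_def)
  consider "Suc k \<in> levels n A" | "k \<in> levels n A" | "Suc k \<notin> levels n A" "k \<notin> levels n A"
    by blast
  then show ?case
  proof cases
    case 1
    then have "k \<notin> levels n A" "Suc k \<notin> unmoved" "Suc k \<in> A" "Suc k \<le> 2*n"
      using Suc_notin_levels levelsD(1) levels_iff by (auto simp: unmoved_def)
    then show ?thesis using step Suc.IH walk_step[of k] 1 by simp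
  next
    case 2
    then have "Suc k \<notin> levels n A" "Suc k \<notin> unmoved" "Suc k \<notin> A" "Suc k \<le> 2*n"
      using Suc_notin_levels levelsD[OF 2] by (auto simp: unmoved_def)
    then show ?thesis using step Suc.IH walk_step[of k] 2 by simp
  next
    case 3
    then have "Suc k \<in> unmoved \<longleftrightarrow> Suc k \<le> 2*n" by (auto simp: unmoved_def)
    then show ?thesis using step Suc.IH walk_step[of k] 3 by simp
  qed
qed

lemma balance_unmoved: "balance A unmoved = 0"
proof -
  have "balance A unmoved = walk A unmoved (2*n)"
    using unmoved_subset by (intro walk_eq_balance[symmetric]) auto
  also have "\<dots> = 0"
    using walk_unmoved[of "2*n"] walk_end levelsD(4) by force
  finally show ?thesis .
qed

lemma walk_unmoved_le_pred_level:
  assumes "l \<in> levels n A"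
  shows "walk A unmoved k \<le> walk A unmoved (l - 1)"
proof -
  have "walk A unmoved (l - 1) = maxf n A - 1"
    using walk_unmoved[of "l - 1"] pred_notin_levels[OF assms] levelsD(5)[OF assms] by simp
  moreover have "walk A unmoved k \<le> maxf n A - 1"
  proof (cases "k \<le> 2*n")
    case True
    then show ?thesis
      using walk_unmoved[of k] walk_le_maxf[of k] walk_below_maxf[of k] by (cases "k \<in> levels n A") auto
  next
    case False
    then have "walk A unmoved k = walk A unmoved (2*n)"
      using unmoved_subset walk_eq_balance[of unmoved k A] walk_eq_balance[of unmoved "2*n" A] by force
    then show ?thesis using balance_unmoved unmoved_subset walk_eq_balance[of unmoved "2*n" A] maxf_pos
      by force
  qed
  ultimately show ?thesis by simp
qed

lemma levels_subset: "levels n A \<subseteq> {1..2*n}" and Suc_levels_subset: "Suc ` levels n A \<subseteq> {1..2*n}"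
  using levelsD(3,4) by force+

lemma unmoved_disjoint: "unmoved \<inter> levels n A = {}" "unmoved \<inter> Suc ` levels n A = {}"
  by (auto simp: unmoved_def)

lemma partition:
  "A = (unmoved \<inter> A) \<union> levels n A"
  "{1..2*n} - A = (unmoved - A) \<union> Suc ` levels n A"
  "BA n A = (unmoved \<inter> A) \<union> Suc ` levels n A"
  "{1..2*n} - BA n A = (unmoved - A) \<union> levels n A"
  using A_subset levelsD(1,2) levels_subset Suc_levels_subset
  by (auto simp: unmoved_def BA_eq)

lemma image_mset_partition:
  "image_mset f (mset_set A) = image_mset f (mset_set (unmoved \<inter> A)) + image_mset f (mset_set (levels n A))"
  "image_mset f (mset_set (BA n A))
    = image_mset f (mset_set (unmoved \<inter> A)) + image_mset f (mset_set (Suc ` levels n A))"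
  "image_mset f (mset_set ({1..2*n} - BA n A))
    = image_mset f (mset_set (unmoved - A)) + image_mset f (mset_set (levels n A))"
proof -
  have fin: "finite (unmoved \<inter> A)" "finite (unmoved - A)" "finite (levels n A)" "finite (Suc ` levels n A)"
    using unmoved_subset levels_subset Suc_levels_subset finite_subset by blast+
  have "mset_set A = mset_set (unmoved \<inter> A \<union> levels n A)"
    using partition(1) by (rule arg_cong[where f = mset_set])
  then show "image_mset f (mset_set A) = image_mset f (mset_set (unmoved \<inter> A)) + image_mset f (mset_set (levels n A))"
    using image_mset_mset_set_Un[OF fin(1,3)] unmoved_disjoint by auto
  show "image_mset f (mset_set (BA n A))
    = image_mset f (mset_set (unmoved \<inter> A)) + image_mset f (mset_set (Suc ` levels n A))"
    unfolding partition(3) using image_mset_mset_set_Un[OF fin(1,4)] unmoved_disjoint by auto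
  show "image_mset f (mset_set ({1..2*n} - BA n A))
    = image_mset f (mset_set (unmoved - A)) + image_mset f (mset_set (levels n A))"
    unfolding partition(4) using image_mset_mset_set_Un[OF fin(2,3)] unmoved_disjoint by auto
qed

lemma level_matching:
  assumes l: "l \<in> levels n A"
  obtains \<pi> where "bij_betw \<pi> (unmoved - A) (unmoved \<inter> A)"
    and "\<And>p. p \<in> unmoved - A \<Longrightarrow> Suc l < p \<and> p < \<pi> p \<or> \<pi> p < l \<and> Suc l < p \<or> p < \<pi> p \<and> \<pi> p < l"
proof -
  let ?\<kappa> = "cyclic_rank (2*n) (l - 1)"
  have fin: "finite unmoved" using unmoved_subset by (rule finite_subset) simp
  have "card {p\<in>unmoved - A. c \<le> ?\<kappa> p} \<le> card {q\<in>unmoved \<inter> A. c \<le> ?\<kappa> q}" for c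
  proof -
    have "0 \<le> balance A {r\<in>unmoved. c \<le> ?\<kappa> r}"
      using unmoved_subset balance_unmoved walk_unmoved_le_pred_level[OF l]
      by (rule balance_cyclic_suffix_nonneg)
    moreover have "{r\<in>unmoved. c \<le> ?\<kappa> r} - A = {p\<in>unmoved - A. c \<le> ?\<kappa> p}"
      and "{r\<in>unmoved. c \<le> ?\<kappa> r} \<inter> A = {q\<in>unmoved \<inter> A. c \<le> ?\<kappa> q}" by auto
    ultimately show ?thesis using balance_nonneg_imp_card_le by metis
  qed
  moreover have "?\<kappa> ` (unmoved - A) \<inter> ?\<kappa> ` (unmoved \<inter> A) = {}"
    using inj_on_image_Int[OF inj_on_cyclic_rank, where A = "unmoved - A" and B = "unmoved \<inter> A"]
      unmoved_subset by auto
  ultimately obtain \<pi> where \<pi>: "inj_on \<pi> (unmoved - A)" "\<pi> ` (unmoved - A) \<subseteq> unmoved \<inter> A"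
    "\<And>p. p \<in> unmoved - A \<Longrightarrow> ?\<kappa> p < ?\<kappa> (\<pi> p)"
    using ballot_matching[of "unmoved - A" "unmoved \<inter> A" ?\<kappa>] fin by auto
  have "card (unmoved - A) = card (unmoved \<inter> A)"
    using balance_unmoved by (simp add: balance_def)
  then have "bij_betw \<pi> (unmoved - A) (unmoved \<inter> A)"
    using \<pi>(1,2) fin by (simp add: bij_betw_def card_image card_subset_eq)
  moreover have "Suc l < p \<and> p < \<pi> p \<or> \<pi> p < l \<and> Suc l < p \<or> p < \<pi> p \<and> \<pi> p < l"
    if "p \<in> unmoved - A" for p
  proof -
    have "p \<in> unmoved" "\<pi> p \<in> unmoved" using that \<pi>(2) by auto
    then have "p \<noteq> l" "p \<noteq> Suc l" "\<pi> p \<noteq> l" "\<pi> p \<noteq> Suc l" "p \<le> 2*n" "\<pi> p \<le> 2*n"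
      using l by (auto simp: unmoved_def)
    then show ?thesis using \<pi>(3)[OF that] levelsD(3)[OF l] by (auto simp: cyclic_rank_def split: if_splits)
  qed
  ultimately show ?thesis using that by blast
qed

end

section \<open>Comparison of the costs\<close>

locale peak_lowering_cost = peak_lowering +
  fixes I :: "real set" and w :: "real \<Rightarrow> real \<Rightarrow> ereal" and x :: "nat \<Rightarrow> real"
  assumes well_ordering: "well_ordering I w"
    and w_neq_MInfty: "\<And>a b. a \<in> I \<Longrightarrow> b \<in> I \<Longrightarrow> w a b \<noteq> -\<infinity>"
    and x_in_I: "\<And>i. i \<in> {1..2*n} \<Longrightarrow> x i \<in> I"
    and x_mono: "\<And>i j. 1 \<le> i \<Longrightarrow> i \<le> j \<Longrightarrow> j \<le> 2*n \<Longrightarrow> x i \<le> x j"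
begin

lemma x_le: "i \<in> {1..2*n} \<Longrightarrow> j \<in> {1..2*n} \<Longrightarrow> i \<le> j \<Longrightarrow> x i \<le> x j"
  using x_mono by simp

lemma w_x_neq_MInfty: "i \<in> {1..2*n} \<Longrightarrow> j \<in> {1..2*n} \<Longrightarrow> w (x i) (x j) \<noteq> -\<infinity>"
  using w_neq_MInfty x_in_I by blast

definition interaction_A :: "nat \<Rightarrow> ereal" where
  "interaction_A l = (\<Sum>r\<in>unmoved \<inter> A. w (x r) (x l)) + (\<Sum>r\<in>unmoved - A. w (x r) (x (Suc l)))"

definition interaction_BA :: "nat \<Rightarrow> ereal" where
  "interaction_BA l = (\<Sum>r\<in>unmoved - A. w (x r) (x l)) + (\<Sum>r\<in>unmoved \<inter> A. w (x r) (x (Suc l)))"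

lemma x_cyclic_order:
  assumes l: "l \<in> levels n A" and U: "p \<in> {1..2*n}" "q \<in> {1..2*n}"
    and order: "Suc l < p \<and> p < q \<or> q < l \<and> Suc l < p \<or> p < q \<and> q < l"
  shows "x (Suc l) \<le> x p \<and> x p \<le> x q \<or> x q \<le> x l \<and> x (Suc l) \<le> x p \<or> x p \<le> x q \<and> x q \<le> x l"
proof -
  have lU: "l \<in> {1..2*n}" "Suc l \<in> {1..2*n}" using levelsD(3,4)[OF l] by auto
  from order show ?thesis
  proof (elim disjE conjE)
    assume "Suc l < p" "p < q"
    then show ?thesis using x_le[OF lU(2) U(1)] x_le[OF U] by simp
  next
    assume "q < l" "Suc l < p"
    then show ?thesis using x_le[OF U(2) lU(1)] x_le[OF lU(2) U(1)] by simp
  next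
    assume "p < q" "q < l"
    then show ?thesis using x_le[OF U] x_le[OF U(2) lU(1)] by simp
  qed
qed

lemma level_exchange:
  assumes l: "l \<in> levels n A"
  obtains \<pi> where "bij_betw \<pi> (unmoved - A) (unmoved \<inter> A)"
    and "\<And>p. p \<in> unmoved - A \<Longrightarrow>
      w (x p) (x l) + w (x (\<pi> p)) (x (Suc l)) \<le> w (x (\<pi> p)) (x l) + w (x p) (x (Suc l))"
    and "\<And>p. strictly_well_ordering I w \<Longrightarrow> x l \<noteq> x (Suc l) \<Longrightarrow> p \<in> unmoved - A \<Longrightarrow>
      w (x p) (x l) + w (x (\<pi> p)) (x (Suc l)) = w (x (\<pi> p)) (x l) + w (x p) (x (Suc l)) \<Longrightarrow>
      w (x (\<pi> p)) (x l) + w (x p) (x (Suc l)) \<noteq> \<infinity> \<Longrightarrow> x p = x (\<pi> p)"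
proof -
  obtain \<pi> where \<pi>: "bij_betw \<pi> (unmoved - A) (unmoved \<inter> A)"
    and order: "\<And>p. p \<in> unmoved - A \<Longrightarrow> Suc l < p \<and> p < \<pi> p \<or> \<pi> p < l \<and> Suc l < p \<or> p < \<pi> p \<and> \<pi> p < l"
    using level_matching[OF l] by blast
  have U: "l \<in> {1..2*n}" "Suc l \<in> {1..2*n}" using levelsD(3,4)[OF l] by auto
  have xl: "x l \<le> x (Suc l)" using U by (intro x_le) auto
  have pU: "p \<in> {1..2*n}" "\<pi> p \<in> {1..2*n}" if "p \<in> unmoved - A" for p
    using that bij_betw_apply[OF \<pi> that] unmoved_subset by auto
  have cyclic: "x (Suc l) \<le> x p \<and> x p \<le> x (\<pi> p) \<or> x (\<pi> p) \<le> x l \<and> x (Suc l) \<le> x p \<or>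
      x p \<le> x (\<pi> p) \<and> x (\<pi> p) \<le> x l" if p: "p \<in> unmoved - A" for p
    using x_cyclic_order[OF l pU[OF p] order[OF p]] .
  have I: "x l \<in> I" "x (Suc l) \<in> I" "x p \<in> I" "x (\<pi> p) \<in> I" if "p \<in> unmoved - A" for p
    using x_in_I U pU[OF that] by auto
  show ?thesis
  proof (rule that[OF \<pi>])
    show "w (x p) (x l) + w (x (\<pi> p)) (x (Suc l)) \<le> w (x (\<pi> p)) (x l) + w (x p) (x (Suc l))"
      if "p \<in> unmoved - A" for p
      using well_ordering_exchange[OF well_ordering I[OF that] xl cyclic[OF that]] .
    show "x p = x (\<pi> p)"
      if "strictly_well_ordering I w" "x l \<noteq> x (Suc l)" "p \<in> unmoved - A"
        "w (x p) (x l) + w (x (\<pi> p)) (x (Suc l)) = w (x (\<pi> p)) (x l) + w (x p) (x (Suc l))"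
        "w (x (\<pi> p)) (x l) + w (x p) (x (Suc l)) \<noteq> \<infinity>" for p
      using strictly_well_ordering_exchange[OF that(1) I[OF that(3)] _ cyclic[OF that(3)] that(4,5)]
        xl that(2) by simp
  qed
qed

lemma interaction_BA_le:
  assumes "l \<in> levels n A"
  shows "interaction_BA l \<le> interaction_A l"
proof -
  obtain \<pi> where "bij_betw \<pi> (unmoved - A) (unmoved \<inter> A)"
    and "\<And>p. p \<in> unmoved - A \<Longrightarrow>
      w (x p) (x l) + w (x (\<pi> p)) (x (Suc l)) \<le> w (x (\<pi> p)) (x l) + w (x p) (x (Suc l))"
    by (rule level_exchange[OF assms]) blast
  then show ?thesis unfolding interaction_A_def interaction_BA_def
    by (rule exchange_sum_le[where a = "\<lambda>r. w (x r) (x l)" and b = "\<lambda>r. w (x r) (x (Suc l))"])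
qed

lemma interaction_eq_imp_image_mset_eq:
  assumes swo: "strictly_well_ordering I w" and l: "l \<in> levels n A" and "x l \<noteq> x (Suc l)"
    and eq: "interaction_BA l = interaction_A l" and fin: "interaction_A l \<noteq> \<infinity>"
  shows "image_mset x (mset_set (unmoved - A)) = image_mset x (mset_set (unmoved \<inter> A))"
proof -
  obtain \<pi> where \<pi>: "bij_betw \<pi> (unmoved - A) (unmoved \<inter> A)"
    and le: "\<And>p. p \<in> unmoved - A \<Longrightarrow>
      w (x p) (x l) + w (x (\<pi> p)) (x (Suc l)) \<le> w (x (\<pi> p)) (x l) + w (x p) (x (Suc l))"
    and strict: "\<And>p. strictly_well_ordering I w \<Longrightarrow> x l \<noteq> x (Suc l) \<Longrightarrow> p \<in> unmoved - A \<Longrightarrow>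
      w (x p) (x l) + w (x (\<pi> p)) (x (Suc l)) = w (x (\<pi> p)) (x l) + w (x p) (x (Suc l)) \<Longrightarrow>
      w (x (\<pi> p)) (x l) + w (x p) (x (Suc l)) \<noteq> \<infinity> \<Longrightarrow> x p = x (\<pi> p)"
    by (rule level_exchange[OF l]) blast
  have fin_unmoved: "finite unmoved" using unmoved_subset by (rule finite_subset) simp
  have U: "l \<in> {1..2*n}" "Suc l \<in> {1..2*n}" using levelsD(3,4)[OF l] by auto
  have neg: "w (x r) (x l) \<noteq> -\<infinity> \<and> w (x r) (x (Suc l)) \<noteq> -\<infinity>"
    if "r \<in> (unmoved - A) \<union> (unmoved \<inter> A)" for r
    using w_x_neq_MInfty U unmoved_subset that by blast
  have "x (\<pi> p) = x p" if p: "p \<in> unmoved - A" for p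
  proof (rule strict[OF swo \<open>x l \<noteq> x (Suc l)\<close> p, symmetric])
    note exchange_sum_eq_imp_eq[where a = "\<lambda>r. w (x r) (x l)" and b = "\<lambda>r. w (x r) (x (Suc l))",
      OF _ \<pi> le neg eq[unfolded interaction_A_def interaction_BA_def] fin[unfolded interaction_A_def] p]
    then show "w (x p) (x l) + w (x (\<pi> p)) (x (Suc l)) = w (x (\<pi> p)) (x l) + w (x p) (x (Suc l))"
      and "w (x (\<pi> p)) (x l) + w (x p) (x (Suc l)) \<noteq> \<infinity>"
      using fin_unmoved by simp_all
  qed
  then show ?thesis using image_mset_eq_if_bij_betw[OF _ \<pi>, of x] fin_unmoved by simp
qed

lemma interaction_BA_neq_MInfty:
  assumes "l \<in> levels n A"
  shows "interaction_BA l \<noteq> -\<infinity>"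
proof -
  have "l \<in> {1..2*n}" "Suc l \<in> {1..2*n}" using assms levels_subset Suc_levels_subset by auto
  then have neq: "w (x r) (x l) \<noteq> -\<infinity>" "w (x r) (x (Suc l)) \<noteq> -\<infinity>" if "r \<in> unmoved" for r
    using that unmoved_subset w_x_neq_MInfty by blast+
  have "(\<Sum>r\<in>unmoved - A. w (x r) (x l)) \<noteq> -\<infinity>" using neq by (intro sum_neq_MInfty) simp
  moreover have "(\<Sum>r\<in>unmoved \<inter> A. w (x r) (x (Suc l))) \<noteq> -\<infinity>" using neq by (intro sum_neq_MInfty) simp
  ultimately show ?thesis unfolding interaction_BA_def by simp
qed

definition self_cost :: "nat set \<Rightarrow> ereal" where
  "self_cost X = (\<Sum>(p, q)\<in>X \<times> X - Id. w (x p) (x q))"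

definition cross_cost :: "nat set \<Rightarrow> nat set \<Rightarrow> ereal" where
  "cross_cost X Y = (\<Sum>q\<in>Y. \<Sum>p\<in>X. w (x p) (x q))"

lemma cost_Un:
  assumes "X \<subseteq> {1..2*n}" "Y \<subseteq> {1..2*n}" "X \<inter> Y = {}"
  shows "cost w (subvec x (X \<union> Y)) = self_cost X + self_cost Y + cross_cost X Y + cross_cost X Y"
proof -
  have fin: "finite X" "finite Y" using assms(1,2) finite_subset by auto
  have "w (x q) (x p) = w (x p) (x q)" if "p \<in> X" "q \<in> Y" for p q
    using well_ordering_sym[OF well_ordering] x_in_I assms(1,2) that by blast
  then show ?thesis
    unfolding self_cost_def cross_cost_def using fin assms(3)
    by (simp add: cost_subvec sum_off_diag_Un)
qed

lemma cross_cost_Suc_levels: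
  "cross_cost X (Suc ` levels n A) = (\<Sum>l\<in>levels n A. \<Sum>p\<in>X. w (x p) (x (Suc l)))"
  unfolding cross_cost_def by (simp add: sum.reindex)

lemma sum_interaction_A:
  "(\<Sum>l\<in>levels n A. interaction_A l) = cross_cost (unmoved \<inter> A) (levels n A) + cross_cost (unmoved - A) (Suc ` levels n A)"
  unfolding interaction_A_def cross_cost_Suc_levels by (simp add: sum.distrib cross_cost_def)

lemma sum_interaction_BA:
  "(\<Sum>l\<in>levels n A. interaction_BA l) = cross_cost (unmoved - A) (levels n A) + cross_cost (unmoved \<inter> A) (Suc ` levels n A)"
  unfolding interaction_BA_def cross_cost_Suc_levels by (simp add: sum.distrib cross_cost_def)

definition fixed_cost :: ereal where
  "fixed_cost = self_cost (unmoved \<inter> A) + self_cost (unmoved - A)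
    + self_cost (levels n A) + self_cost (Suc ` levels n A)"

lemma cost_A_eq:
  "cost w (subvec x A) + cost w (subvec x ({1..2*n} - A))
    = fixed_cost + (\<Sum>l\<in>levels n A. interaction_A l) + (\<Sum>l\<in>levels n A. interaction_A l)"
proof -
  have "cost w (subvec x A) = self_cost (unmoved \<inter> A) + self_cost (levels n A)
      + cross_cost (unmoved \<inter> A) (levels n A) + cross_cost (unmoved \<inter> A) (levels n A)"
    using unmoved_subset levels_subset unmoved_disjoint by (subst partition(1), intro cost_Un) auto
  moreover have "cost w (subvec x ({1..2*n} - A)) = self_cost (unmoved - A) + self_cost (Suc ` levels n A)
      + cross_cost (unmoved - A) (Suc ` levels n A) + cross_cost (unmoved - A) (Suc ` levels n A)"
    using unmoved_subset Suc_levels_subset unmoved_disjoint by (subst partition(2), intro cost_Un) auto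
  ultimately show ?thesis unfolding sum_interaction_A fixed_cost_def by (simp add: ac_simps)
qed

lemma cost_BA_eq:
  "cost w (subvec x (BA n A)) + cost w (subvec x ({1..2*n} - BA n A))
    = fixed_cost + (\<Sum>l\<in>levels n A. interaction_BA l) + (\<Sum>l\<in>levels n A. interaction_BA l)"
proof -
  have "cost w (subvec x (BA n A)) = self_cost (unmoved \<inter> A) + self_cost (Suc ` levels n A)
      + cross_cost (unmoved \<inter> A) (Suc ` levels n A) + cross_cost (unmoved \<inter> A) (Suc ` levels n A)"
    using unmoved_subset Suc_levels_subset unmoved_disjoint by (subst partition(3), intro cost_Un) auto
  moreover have "cost w (subvec x ({1..2*n} - BA n A)) = self_cost (unmoved - A) + self_cost (levels n A)
      + cross_cost (unmoved - A) (levels n A) + cross_cost (unmoved - A) (levels n A)"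
    using unmoved_subset levels_subset unmoved_disjoint by (subst partition(4), intro cost_Un) auto
  ultimately show ?thesis unfolding sum_interaction_BA fixed_cost_def by (simp add: ac_simps)
qed

lemma self_cost_neq_MInfty:
  assumes "X \<subseteq> {1..2*n}"
  shows "self_cost X \<noteq> -\<infinity>"
  unfolding self_cost_def
proof (rule sum_neq_MInfty)
  fix pq assume "pq \<in> X \<times> X - Id"
  then obtain p q where "pq = (p, q)" "p \<in> X" "q \<in> X" by blast
  moreover from this assms have "p \<in> {1..2*n}" "q \<in> {1..2*n}" by auto
  ultimately show "(case pq of (p, q) \<Rightarrow> w (x p) (x q)) \<noteq> -\<infinity>" using w_x_neq_MInfty by simp
qed

lemma fixed_cost_neq_MInfty: "fixed_cost \<noteq> -\<infinity>"
  using self_cost_neq_MInfty unmoved_subset levels_subset Suc_levels_subset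
  unfolding fixed_cost_def by (simp add: subset_iff)

lemma cost_BA_le:
  "cost w (subvec x (BA n A)) + cost w (subvec x ({1..2*n} - BA n A))
    \<le> cost w (subvec x A) + cost w (subvec x ({1..2*n} - A))"
proof -
  have "(\<Sum>l\<in>levels n A. interaction_BA l) \<le> (\<Sum>l\<in>levels n A. interaction_A l)"
    by (intro sum_mono interaction_BA_le)
  then show ?thesis unfolding cost_A_eq cost_BA_eq by (intro add_mono) auto
qed

lemma cost_BA_eq_imp_image_mset_eq:
  assumes swo: "strictly_well_ordering I w"
    and eq: "cost w (subvec x (BA n A)) + cost w (subvec x ({1..2*n} - BA n A))
      = cost w (subvec x A) + cost w (subvec x ({1..2*n} - A))"
    and fin: "cost w (subvec x (BA n A)) + cost w (subvec x ({1..2*n} - BA n A)) < \<infinity>"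
  shows "image_mset x (mset_set A) = image_mset x (mset_set (BA n A))
    \<or> image_mset x (mset_set A) = image_mset x (mset_set ({1..2*n} - BA n A))"
proof -
  let ?SA = "\<Sum>l\<in>levels n A. interaction_A l" and ?SB = "\<Sum>l\<in>levels n A. interaction_BA l"
  have SB: "?SB \<noteq> -\<infinity>" using interaction_BA_neq_MInfty by (intro sum_neq_MInfty)
  have le: "?SB \<le> ?SA" by (intro sum_mono interaction_BA_le)
  have eq': "fixed_cost + ?SB + ?SB = fixed_cost + ?SA + ?SA"
    using eq unfolding cost_A_eq cost_BA_eq .
  have fin': "fixed_cost + ?SA + ?SA \<noteq> \<infinity>"
    using fin unfolding eq cost_A_eq by simp
  note SB_eq_SA = ereal_double_add_eq_imp_eq[OF le eq' fin' fixed_cost_neq_MInfty SB]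
  have fin_levels: "finite (levels n A)" using levels_subset by (rule finite_subset) simp
  have level: "interaction_BA l = interaction_A l" "interaction_A l \<noteq> \<infinity>" if "l \<in> levels n A" for l
    using sum_mono_eq_imp_eq[OF fin_levels interaction_BA_le interaction_BA_neq_MInfty SB_eq_SA, of l] that
    by simp_all
  show ?thesis
  proof (cases "\<exists>l\<in>levels n A. x l \<noteq> x (Suc l)")
    case True
    then obtain l where l: "l \<in> levels n A" "x l \<noteq> x (Suc l)" by blast
    then have "image_mset x (mset_set (unmoved - A)) = image_mset x (mset_set (unmoved \<inter> A))"
      using interaction_eq_imp_image_mset_eq[OF swo l level[OF l(1)]] by blast
    then have "image_mset x (mset_set A) = image_mset x (mset_set ({1..2*n} - BA n A))"
      unfolding image_mset_partition by simp
    then show ?thesis ..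
  next
    case False
    have "bij_betw Suc (levels n A) (Suc ` levels n A)" by (simp add: bij_betw_def)
    then have "image_mset x (mset_set (levels n A)) = image_mset x (mset_set (Suc ` levels n A))"
      using False fin_levels by (intro image_mset_eq_if_bij_betw) auto
    then have "image_mset x (mset_set A) = image_mset x (mset_set (BA n A))"
      unfolding image_mset_partition by simp
    then show ?thesis ..
  qed
qed

end

theorem lemma3p4:
  fixes I :: "real set" and w :: "real \<Rightarrow> real \<Rightarrow> ereal" and n :: nat and A :: "nat set"
  assumes "is_interval I"
    and "\<forall>a\<in>I. \<forall>b\<in>I. w a b \<noteq> -\<infinity>"
    and "well_ordering I w"
    and "A \<subseteq> {1..2*n}" and "card A = n"
    and "maxf n A \<ge> 1"
  shows "(osc n A \<ge> 2 \<longrightarrow> osc n (BA n A) < osc n A)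
    \<and> (\<forall>x :: nat \<Rightarrow> real. (\<forall>i\<in>{1..2*n}. x i \<in> I) \<and> (\<forall>i j. 1 \<le> i \<and> i \<le> j \<and> j \<le> 2*n \<longrightarrow> x i \<le> x j) \<longrightarrow>
         cost w (subvec x (BA n A)) + cost w (subvec x ({1..2*n} - BA n A))
           \<le> cost w (subvec x A) + cost w (subvec x ({1..2*n} - A)))
    \<and> (strictly_well_ordering I w \<longrightarrow>
       (\<forall>x :: nat \<Rightarrow> real. (\<forall>i\<in>{1..2*n}. x i \<in> I) \<and> (\<forall>i j. 1 \<le> i \<and> i \<le> j \<and> j \<le> 2*n \<longrightarrow> x i \<le> x j)
          \<and> cost w (subvec x (BA n A)) + cost w (subvec x ({1..2*n} - BA n A)) < \<infinity> \<longrightarrow>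
         (cost w (subvec x (BA n A)) + cost w (subvec x ({1..2*n} - BA n A))
            = cost w (subvec x A) + cost w (subvec x ({1..2*n} - A))
          \<longleftrightarrow> image_mset x (mset_set A) = image_mset x (mset_set (BA n A))
              \<or> image_mset x (mset_set A) = image_mset x (mset_set ({1..2*n} - BA n A)))))"
proof -
  interpret peak_lowering n A using assms(4-6) by unfold_locales
  have costs: "peak_lowering_cost n A I w x"
    if "(\<forall>i\<in>{1..2*n}. x i \<in> I) \<and> (\<forall>i j. 1 \<le> i \<and> i \<le> j \<and> j \<le> 2*n \<longrightarrow> x i \<le> x j)" for x
    using that assms(2,3) by unfold_locales auto
  show ?thesis
  proof (intro conjI allI impI)
    show "2 \<le> osc n A \<Longrightarrow> osc n (BA n A) < osc n A" by (rule osc_BA_less)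
  next
    fix x :: "nat \<Rightarrow> real"
    assume "(\<forall>i\<in>{1..2*n}. x i \<in> I) \<and> (\<forall>i j. 1 \<le> i \<and> i \<le> j \<and> j \<le> 2*n \<longrightarrow> x i \<le> x j)"
    then show "cost w (subvec x (BA n A)) + cost w (subvec x ({1..2*n} - BA n A))
      \<le> cost w (subvec x A) + cost w (subvec x ({1..2*n} - A))"
      using peak_lowering_cost.cost_BA_le[OF costs] by blast
  next
    fix x :: "nat \<Rightarrow> real"
    assume swo: "strictly_well_ordering I w"
      and x: "(\<forall>i\<in>{1..2*n}. x i \<in> I) \<and> (\<forall>i j. 1 \<le> i \<and> i \<le> j \<and> j \<le> 2*n \<longrightarrow> x i \<le> x j)
        \<and> cost w (subvec x (BA n A)) + cost w (subvec x ({1..2*n} - BA n A)) < \<infinity>"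
    show "cost w (subvec x (BA n A)) + cost w (subvec x ({1..2*n} - BA n A))
            = cost w (subvec x A) + cost w (subvec x ({1..2*n} - A))
          \<longleftrightarrow> image_mset x (mset_set A) = image_mset x (mset_set (BA n A))
              \<or> image_mset x (mset_set A) = image_mset x (mset_set ({1..2*n} - BA n A))"
      using peak_lowering_cost.cost_BA_eq_imp_image_mset_eq[OF costs swo] x
        cost_complements_eq_if_image_mset_eq[OF _ A_subset BA_subset] by blast
  qed
qed

end
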